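(* Let $f:\mathbb{R}^d\to\mathbb{R}$ be $(p,C)$-smooth with $p=q+\beta$, $q\in\mathbb{N}_0$, $\beta\in(0,1]$, let $A\ge1$, $K\in\mathbb{N}$, and let $\delta$, $u_{\mathbf{k}}$, $I$ and $P$ be as in the context. Let $\mathbf{r}\in I$ and $x\in[u_{\mathbf{r}},u_{\mathbf{r}}+\delta\cdot\mathbf{1})$. Then $P(x)=(Tf)_{q,u_{\mathbf{r}}}(x)$.
   Context: $(p,C)$-smooth: all partial derivatives of order $q$ exist and are $\beta$-Hölder with constant $C$. For a $q$ times differentiable $g$ and $u\in\mathbb{R}^d$, $(Tg)_{q,u}(x)=\sum_{j_1+\dots+j_d\le q}\frac{1}{j_1!\cdots j_d!}\frac{\partial^{j_1+\dots+j_d}g}{\partial (x^{(1)})^{j_1}\cdots\partial (x^{(d)})^{j_d}}(u)\,(x^{(1)}-u^{(1)})^{j_1}\cdots(x^{(d)}-u^{(d)})^{j_d}$ is the Taylor polynomial of degree $q$ around $u$. Let $\delta=2A/K$, $u_k=-A+k\cdot 2A/K$ ($k=0,\dots,K-1$), $I=\{0,\dots,K-1\}^d$, $u_{\mathbf{k}}=(u_{k^{(1)}},\dots,u_{k^{(d)}})$ for $\mathbf{k}\in I$. For $\mathbf{a},\mathbf{b}\in\mathbb{R}^d$, $\mathbf{a}\le\mathbf{b}$ means $a^{(l)}\le b^{(l)}$ for all $l$, and $\mathbf{a}<\mathbf{b}$ means $\mathbf{a}\le\mathbf{b}$ and $\mathbf{a}\ne\mathbf{b}$; $[\mathbf{a},\infty)=\prod_l[a^{(l)},\infty)$,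 $[\mathbf{a},\mathbf{b})=\prod_l[a^{(l)},b^{(l)})$, $\mathbf{1}=(1,\dots,1)$. Define $P_{\mathbf{0}}=(Tf)_{q,u_{\mathbf{0}}}$ and recursively $P_{\mathbf{k}}=\big(T(f-\sum_{\mathbf{l}\in I:u_{\mathbf{l}}<u_{\mathbf{k}}}P_{\mathbf{l}})\big)_{q,u_{\mathbf{k}}}$, and $P(x)=\sum_{\mathbf{k}\in I}P_{\mathbf{k}}(x)\,1_{[u_{\mathbf{k}},\infty)}(x)$. *)

theory Defs
  imports "HOL-Analysis.Analysis"
begin

text \<open>Points of R^d are vectors of type real^'d; the coordinates are indexed by a finite,
  linearly ordered type 'd (the order fixes the order of differentiation in mixed partials).\<close>

definition partial :: "'d::finite \<Rightarrow> (real^'d \<Rightarrow> real) \<Rightarrow> real^'d \<Rightarrow> real" where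
  "partial i g x = deriv (\<lambda>t. g (x + t *\<^sub>R axis i 1)) 0"

fun pdl :: "'d::finite list \<Rightarrow> (real^'d \<Rightarrow> real) \<Rightarrow> real^'d \<Rightarrow> real" where
  "pdl [] g = g"
| "pdl (i # is) g = partial i (pdl is g)"

definition dirs :: "('d::{finite,linorder} \<Rightarrow> nat) \<Rightarrow> 'd list" where
  "dirs j = concat (map (\<lambda>l. replicate (j l) l) (sorted_list_of_set (UNIV :: 'd set)))"

definition mpartial :: "('d::{finite,linorder} \<Rightarrow> nat) \<Rightarrow> (real^'d::{finite,linorder} \<Rightarrow> real) \<Rightarrow> real^'d::{finite,linorder} \<Rightarrow> real" where
  "mpartial j g = pdl (dirs j) g"

text \<open>(p,C)-smoothness with p = q + beta: all partial derivatives of order q exist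
  (so all lower order partials exist everywhere and are partially differentiable)
  and the order-q partials are beta-Hoelder with constant C.\<close>
definition pC_smooth :: "nat \<Rightarrow> real \<Rightarrow> real \<Rightarrow> (real^'d::finite \<Rightarrow> real) \<Rightarrow> bool" where
  "pC_smooth q \<beta> C f \<longleftrightarrow>
     (\<forall>ds::'d list. length ds < q \<longrightarrow>
        (\<forall>i x. (\<lambda>t. pdl ds f (x + t *\<^sub>R axis i 1)) differentiable (at 0))) \<and>
     (\<forall>ds::'d list. length ds = q \<longrightarrow>
        (\<forall>x z. \<bar>pdl ds f x - pdl ds f z\<bar> \<le> C * norm (x - z) powr \<beta>))"

definition taylor :: "nat \<Rightarrow> real^'d::{finite,linorder} \<Rightarrow> (real^'d::{finite,linorder} \<Rightarrow> real) \<Rightarrow> real^'d::{finite,linorder} \<Rightarrow> real" where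
  "taylor q u g x = (\<Sum>j\<in>{j::'d::{finite,linorder} \<Rightarrow> nat. (\<Sum>l\<in>UNIV. j l) \<le> q}.
      (1 / (\<Prod>l\<in>UNIV. fact (j l))) * mpartial j g u * (\<Prod>l\<in>UNIV. (x $ l - u $ l) ^ (j l)))"

definition grid1 :: "real \<Rightarrow> nat \<Rightarrow> nat \<Rightarrow> real" where
  "grid1 A K k = - A + real k * (2 * A / real K)"

definition gridpt :: "real \<Rightarrow> nat \<Rightarrow> ('d::finite \<Rightarrow> nat) \<Rightarrow> real^'d" where
  "gridpt A K k = (\<chi> l. grid1 A K (k l))"

definition gridI :: "nat \<Rightarrow> ('d::finite \<Rightarrow> nat) set" where
  "gridI K = {k. \<forall>l. k l < K}"

definition vle :: "real^'d \<Rightarrow> real^'d \<Rightarrow> bool" where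
  "vle a b \<longleftrightarrow> (\<forall>l. a $ l \<le> b $ l)"

definition vlt :: "real^'d \<Rightarrow> real^'d \<Rightarrow> bool" where
  "vlt a b \<longleftrightarrow> vle a b \<and> a \<noteq> b"

definition Ppiece :: "real \<Rightarrow> nat \<Rightarrow> (('d::finite \<Rightarrow> nat) \<Rightarrow> real^'d \<Rightarrow> real) \<Rightarrow> real^'d \<Rightarrow> real" where
  "Ppiece A K Pk x = (\<Sum>k\<in>gridI K. Pk k x * (if vle (gridpt A K k) x then 1 else 0))"

end

theory Submission
  imports Defs
begin

(* Every Taylor polynomial, and every finite sum of them, is a finite linear combination of
   shifted monomials prod_l (y_l - v_l)^(e_l) of degree at most q, and the degree-q Taylor
   expansion reproduces such polynomials. Taylor expansion is also linear on functions whose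
   partials of order < q are differentiable, so the recursion defining P_r reads
   P_r = (Tf)_{q,u_r} - sum_{u_l < u_r} P_l. For x in the cell [u_r, u_r + delta 1) the grid
   points u_k <= x are exactly those with k <= r, hence P(x) = sum_{k <= r} P_k(x) = (Tf)_{q,u_r}(x). *)

definition shifted_poly ::
    "('a \<Rightarrow> real) \<Rightarrow> ('a \<Rightarrow> real^'d::finite) \<Rightarrow> ('a \<Rightarrow> 'd \<Rightarrow> nat) \<Rightarrow> 'a set \<Rightarrow> real^'d \<Rightarrow> real" where
  "shifted_poly c v e S y = (\<Sum>a\<in>S. c a * (\<Prod>l\<in>UNIV. (y $ l - v a $ l) ^ e a l))"

lemma fact_mult_choose_Suc:
  "fact (Suc k) * real (n choose Suc k) = (fact k * real (n choose k)) * real (n - k)"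
proof -
  have "Suc k * (n choose Suc k) = (n - k) * (n choose k)"
    by (metis binomial_absorption binomial_absorb_comp)
  then have "real (Suc k) * real (n choose Suc k) = real (n - k) * real (n choose k)"
    by (metis of_nat_mult)
  then show ?thesis
    by (simp only: fact_Suc of_nat_Suc[symmetric] mult.assoc mult.left_commute[of "fact k"]) simp
qed

lemma binomial_recentre:
  fixes x u w :: real
  shows "(\<Sum>k\<le>n. real (n choose k) * (u - w) ^ (n - k) * (x - u) ^ k) = (x - w) ^ n"
  using binomial_ring[of "x - u" "u - w" n] by (simp add: mult_ac)

lemma finite_multiindex_le: "finite {j::'d::finite \<Rightarrow> nat. (\<Sum>l\<in>UNIV. j l) \<le> q}"
proof (rule finite_subset)
  show "{j::'d \<Rightarrow> nat. (\<Sum>l\<in>UNIV. j l) \<le> q} \<subseteq> PiE UNIV (\<lambda>_. {..q})"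
  proof
    fix j :: "'d \<Rightarrow> nat" assume "j \<in> {j. (\<Sum>l\<in>UNIV. j l) \<le> q}"
    then have "j l \<le> q" for l using member_le_sum[of l UNIV j] by auto
    then show "j \<in> PiE UNIV (\<lambda>_. {..q})" by auto
  qed
qed (rule finite_PiE, auto)

lemma sum_multiindex_prod_eq_prod_sum:
  fixes h :: "'d::finite \<Rightarrow> nat \<Rightarrow> real"
  assumes h0: "\<And>l k. e l < k \<Longrightarrow> h l k = 0" and deg: "(\<Sum>l\<in>UNIV. e l) \<le> q"
  shows "(\<Sum>j\<in>{j. (\<Sum>l\<in>UNIV. j l) \<le> q}. \<Prod>l\<in>UNIV. h l (j l)) = (\<Prod>l\<in>UNIV. \<Sum>k\<le>e l. h l k)"
proof -
  have "(\<Prod>l\<in>UNIV. \<Sum>k\<le>e l. h l k) = (\<Sum>j\<in>PiE UNIV (\<lambda>l. {..e l}). \<Prod>l\<in>UNIV. h l (j l))"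
    by (rule prod_sum_PiE) auto
  also have "\<dots> = (\<Sum>j\<in>{j. (\<Sum>l\<in>UNIV. j l) \<le> q}. \<Prod>l\<in>UNIV. h l (j l))"
  proof (rule sum.mono_neutral_left[OF finite_multiindex_le])
    show "PiE UNIV (\<lambda>l. {..e l}) \<subseteq> {j. (\<Sum>l\<in>UNIV. j l) \<le> q}"
      using deg by (auto intro: order_trans[OF sum_mono])
    show "\<forall>j\<in>{j. (\<Sum>l\<in>UNIV. j l) \<le> q} - PiE UNIV (\<lambda>l. {..e l}). (\<Prod>l\<in>UNIV. h l (j l)) = 0"
    proof
      fix j assume "j \<in> {j. (\<Sum>l\<in>UNIV. j l) \<le> q} - PiE UNIV (\<lambda>l. {..e l})"
      then obtain l where "e l < j l" by (auto simp: PiE_def Pi_def not_le)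
      then show "(\<Prod>l\<in>UNIV. h l (j l)) = 0" using h0 by (intro prod_zero) auto
    qed
  qed
  finally show ?thesis ..
qed

lemma count_list_dirs: "count_list (dirs j) l = j l"
proof -
  have "count_list (replicate n x) y = (if x = y then n else 0)" for n and x y :: 'a
    by (induction n) auto
  then show ?thesis
    by (simp add: dirs_def count_list_concat sum_list_distinct_conv_sum_set o_def)
qed

lemma length_dirs: "length (dirs j) = (\<Sum>l\<in>UNIV. j l)"
  by (simp add: dirs_def length_concat sum_list_distinct_conv_sum_set o_def)

lemma shifted_monomial_has_axis_derivative:
  fixes y w :: "real^'d::finite" and n :: "'d \<Rightarrow> nat"
  shows "((\<lambda>t. \<Prod>l\<in>UNIV. ((y + t *\<^sub>R axis i 1) $ l - w $ l) ^ n l) has_real_derivative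
      real (n i) * (\<Prod>l\<in>UNIV. (y $ l - w $ l) ^ (n(i := n i - 1)) l)) (at 0)"
proof -
  define R where "R = (\<Prod>l\<in>UNIV - {i}. (y $ l - w $ l) ^ n l)"
  have "(\<lambda>t. \<Prod>l\<in>UNIV. ((y + t *\<^sub>R axis i 1) $ l - w $ l) ^ n l) = (\<lambda>t. (y $ i + t - w $ i) ^ n i * R)"
  proof
    fix t
    have "(\<Prod>l\<in>UNIV - {i}. ((y + t *\<^sub>R axis i 1) $ l - w $ l) ^ n l) = R"
      unfolding R_def by (intro prod.cong) (auto simp: axis_def)
    then show "(\<Prod>l\<in>UNIV. ((y + t *\<^sub>R axis i 1) $ l - w $ l) ^ n l) = (y $ i + t - w $ i) ^ n i * R"
      by (subst prod.remove[of UNIV i]) (auto simp: axis_def)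
  qed
  moreover have "(\<Prod>l\<in>UNIV. (y $ l - w $ l) ^ (n(i := n i - 1)) l) = (y $ i - w $ i) ^ (n i - 1) * R"
    unfolding R_def by (subst prod.remove[of UNIV i]) (auto intro!: prod.cong)
  moreover have "((\<lambda>t. (y $ i + t - w $ i) ^ n i * R) has_real_derivative
      real (n i) * (y $ i + 0 - w $ i) ^ (n i - 1) * R) (at 0)"
    by (auto intro!: derivative_eq_intros)
  ultimately show ?thesis by (simp add: mult_ac)
qed

lemma shifted_poly_has_axis_derivative:
  "((\<lambda>t. shifted_poly c v e S (y + t *\<^sub>R axis i 1)) has_real_derivative
     shifted_poly (\<lambda>a. c a * real (e a i)) v (\<lambda>a. (e a)(i := e a i - 1)) S y) (at 0)"
  unfolding shifted_poly_def
  by (rule DERIV_sum, rule DERIV_cmult[THEN DERIV_cong], rule shifted_monomial_has_axis_derivative)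
    (simp add: mult_ac)

lemma partial_shifted_poly:
  "partial i (shifted_poly c v e S) =
     shifted_poly (\<lambda>a. c a * real (e a i)) v (\<lambda>a. (e a)(i := e a i - 1)) S"
  unfolding partial_def
  by (rule ext, rule DERIV_imp_deriv, rule shifted_poly_has_axis_derivative)

lemma pdl_shifted_poly:
  "pdl ds (shifted_poly c v e S) =
     shifted_poly (\<lambda>a. c a * (\<Prod>l\<in>UNIV. fact (count_list ds l) * real (e a l choose count_list ds l)))
       v (\<lambda>a l. e a l - count_list ds l) S"
proof (induction ds)
  case Nil
  then show ?case by simp
next
  case (Cons i ds)
  define g where "g a l k = fact k * real (e a l choose k)" for a l k
  have coeff: "(\<Prod>l\<in>UNIV. g a l (count_list (i # ds) l)) =
      (\<Prod>l\<in>UNIV. g a l (count_list ds l)) * real (e a i - count_list ds i)" for a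
  proof -
    have "(\<Prod>l\<in>UNIV. g a l (count_list (i # ds) l)) =
        g a i (Suc (count_list ds i)) * (\<Prod>l\<in>UNIV - {i}. g a l (count_list ds l))"
      by (subst prod.remove[of UNIV i]) (auto intro!: prod.cong)
    also have "\<dots> = g a i (count_list ds i) * real (e a i - count_list ds i) *
        (\<Prod>l\<in>UNIV - {i}. g a l (count_list ds l))"
      by (simp only: g_def fact_mult_choose_Suc)
    also have "\<dots> = (\<Prod>l\<in>UNIV. g a l (count_list ds l)) * real (e a i - count_list ds i)"
      by (subst prod.remove[of UNIV i]) (simp_all add: mult_ac)
    finally show ?thesis .
  qed
  have expo: "(\<lambda>l. e a l - count_list ds l)(i := e a i - count_list ds i - 1) =
      (\<lambda>l. e a l - count_list (i # ds) l)" for a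
    by auto
  show ?case
    using coeff expo by (simp add: Cons partial_shifted_poly g_def mult.assoc)
qed

lemma mpartial_shifted_poly:
  "mpartial j (shifted_poly c v e S) =
     shifted_poly (\<lambda>a. c a * (\<Prod>l\<in>UNIV. fact (j l) * real (e a l choose j l))) v (\<lambda>a l. e a l - j l) S"
  by (simp add: mpartial_def pdl_shifted_poly count_list_dirs)

lemma taylor_shifted_poly:
  fixes u x :: "real^'d::{finite,linorder}"
  assumes deg: "\<forall>a\<in>S. (\<Sum>l\<in>UNIV. e a l) \<le> q"
  shows "taylor q u (shifted_poly c v e S) x = shifted_poly c v e S x"
proof -
  define h where "h a l k = real (e a l choose k) * (u $ l - v a $ l) ^ (e a l - k) * (x $ l - u $ l) ^ k"
    for a l k
  let ?J = "{j::'d \<Rightarrow> nat. (\<Sum>l\<in>UNIV. j l) \<le> q}"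
  have "taylor q u (shifted_poly c v e S) x = (\<Sum>j\<in>?J. \<Sum>a\<in>S. c a * (\<Prod>l\<in>UNIV. h a l (j l)))"
    unfolding taylor_def mpartial_shifted_poly shifted_poly_def h_def
    by (intro sum.cong refl)
      (simp add: sum_distrib_left sum_distrib_right prod.distrib prod_dividef mult_ac)
  also have "\<dots> = (\<Sum>a\<in>S. c a * (\<Sum>j\<in>?J. \<Prod>l\<in>UNIV. h a l (j l)))"
    by (subst sum.swap) (simp add: sum_distrib_left)
  also have "\<dots> = (\<Sum>a\<in>S. c a * (\<Prod>l\<in>UNIV. \<Sum>k\<le>e a l. h a l k))"
    using deg by (intro sum.cong refl arg_cong2[where f = "(*)"] sum_multiindex_prod_eq_prod_sum)
      (auto simp: h_def)
  also have "\<dots> = shifted_poly c v e S x"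
    unfolding shifted_poly_def h_def binomial_recentre ..
  finally show ?thesis .
qed

lemma taylor_eq_shifted_poly:
  "taylor q u g = shifted_poly (\<lambda>j. mpartial j g u / (\<Prod>l\<in>UNIV. fact (j l))) (\<lambda>_. u) (\<lambda>j. j)
     {j. (\<Sum>l\<in>UNIV. j l) \<le> q}"
  unfolding taylor_def shifted_poly_def by (intro ext sum.cong refl) simp

lemma sum_shifted_poly:
  assumes "finite B" "\<forall>b\<in>B. finite (S b)"
  shows "(\<Sum>b\<in>B. shifted_poly (c b) (v b) (e b) (S b) y) =
    shifted_poly (\<lambda>(b, a). c b a) (\<lambda>(b, a). v b a) (\<lambda>(b, a). e b a) (Sigma B S) y"
  unfolding shifted_poly_def using assms by (simp add: sum.Sigma split_def)

definition partials_differentiable :: "nat \<Rightarrow> (real^'d::finite \<Rightarrow> real) \<Rightarrow> bool" where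
  "partials_differentiable n f \<longleftrightarrow>
     (\<forall>ds::'d list. length ds < n \<longrightarrow> (\<forall>i x. (\<lambda>t. pdl ds f (x + t *\<^sub>R axis i 1)) differentiable (at 0)))"

lemma pC_smooth_imp_partials_differentiable:
  "pC_smooth q \<beta> C f \<Longrightarrow> partials_differentiable q f"
  by (simp add: pC_smooth_def partials_differentiable_def)

lemma partials_differentiable_shifted_poly: "partials_differentiable n (shifted_poly c v e S)"
  unfolding partials_differentiable_def pdl_shifted_poly real_differentiable_def
  using shifted_poly_has_axis_derivative by blast

lemma pdl_diff:
  assumes "partials_differentiable n f" "partials_differentiable n g" "length ds \<le> n"
  shows "pdl ds (\<lambda>y. f y - g y) = (\<lambda>y. pdl ds f y - pdl ds g y)"
  using assms(3)
proof (induction ds)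
  case Nil
  then show ?case by simp
next
  case (Cons i ds)
  have "length ds < n" using Cons.prems by simp
  then have "(\<lambda>t. pdl ds h (y + t *\<^sub>R axis i 1)) differentiable (at 0)"
    if "partials_differentiable n h" for h y
    using that unfolding partials_differentiable_def by blast
  with assms(1,2) show ?case
    using Cons by (auto intro!: ext DERIV_imp_deriv DERIV_diff simp: partial_def DERIV_deriv_iff_real_differentiable)
qed

lemma taylor_diff:
  fixes f g :: "real^'d::{finite,linorder} \<Rightarrow> real"
  assumes "partials_differentiable q f" "partials_differentiable q g"
  shows "taylor q u (\<lambda>y. f y - g y) x = taylor q u f x - taylor q u g x"
proof -
  have "mpartial j (\<lambda>y. f y - g y) u = mpartial j f u - mpartial j g u"
    if "(\<Sum>l\<in>UNIV. j l) \<le> q" for j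
    unfolding mpartial_def using pdl_diff[OF assms] that by (simp add: length_dirs)
  then show ?thesis
    unfolding taylor_def sum_subtractf[symmetric]
    by (intro sum.cong refl) (simp add: left_diff_distrib right_diff_distrib)
qed

lemma taylor_diff_sum_taylor:
  fixes f :: "real^'d::{finite,linorder} \<Rightarrow> real"
  assumes f: "partials_differentiable q f" and "finite L"
    and P: "\<forall>l\<in>L. \<exists>v g. P l = taylor q v g"
  shows "taylor q u (\<lambda>y. f y - (\<Sum>l\<in>L. P l y)) x = taylor q u f x - (\<Sum>l\<in>L. P l x)"
proof -
  obtain v g where vg: "\<forall>l\<in>L. P l = taylor q (v l) (g l)" using P by metis
  define J where "J = {j::'d \<Rightarrow> nat. (\<Sum>l\<in>UNIV. j l) \<le> q}"
  define Q where "Q = shifted_poly (\<lambda>(l, j). mpartial j (g l) (v l) / (\<Prod>i\<in>UNIV. fact (j i)))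
    (\<lambda>(l, j). v l) (\<lambda>(l, j). j) (L \<times> J)"
  have sum_P: "(\<Sum>l\<in>L. P l y) = Q y" for y
  proof -
    have "(\<Sum>l\<in>L. P l y) = (\<Sum>l\<in>L. shifted_poly (\<lambda>j. mpartial j (g l) (v l) / (\<Prod>i\<in>UNIV. fact (j i)))
        (\<lambda>_. v l) (\<lambda>j. j) J y)"
      using vg by (simp add: J_def taylor_eq_shifted_poly)
    also have "\<dots> = Q y"
      unfolding Q_def using \<open>finite L\<close>
      by (subst sum_shifted_poly) (simp_all add: J_def finite_multiindex_le)
    finally show ?thesis .
  qed
  have "taylor q u (\<lambda>y. f y - Q y) x = taylor q u f x - taylor q u Q x"
    unfolding Q_def by (rule taylor_diff[OF f partials_differentiable_shifted_poly])
  also have "taylor q u Q x = Q x"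
    unfolding Q_def by (rule taylor_shifted_poly) (auto simp: J_def)
  finally show ?thesis by (simp add: sum_P)
qed

lemma finite_gridI: "finite (gridI K :: ('d::finite \<Rightarrow> nat) set)"
proof (rule finite_subset)
  show "gridI K \<subseteq> PiE (UNIV::'d set) (\<lambda>_. {..<K})" by (auto simp: gridI_def)
qed (rule finite_PiE, auto)

lemma grid1_le_iff:
  assumes "0 < A" "0 < K"
  shows "grid1 A K a \<le> grid1 A K b \<longleftrightarrow> a \<le> b"
proof -
  have "0 < 2 * A / real K" using assms by simp
  then have "real a * (2 * A / real K) \<le> real b * (2 * A / real K) \<longleftrightarrow> a \<le> b"
    by (simp only: mult_le_cancel_right_pos of_nat_le_iff)
  then show ?thesis unfolding grid1_def by linarith
qed

lemma grid1_Suc: "grid1 A K (Suc k) = grid1 A K k + 2 * A / real K"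
  by (simp add: grid1_def algebra_simps add_divide_distrib)

lemma vle_gridpt_iff:
  assumes "0 < A" "0 < K"
  shows "vle (gridpt A K k) (gridpt A K r) \<longleftrightarrow> (\<forall>l. k l \<le> r l)"
  using grid1_le_iff[OF assms] by (simp add: vle_def gridpt_def)

lemma vlt_gridpt_iff:
  assumes "0 < A" "0 < K"
  shows "vlt (gridpt A K k) (gridpt A K r) \<longleftrightarrow> (\<forall>l. k l \<le> r l) \<and> k \<noteq> r"
proof -
  have "gridpt A K k = gridpt A K r \<Longrightarrow> k = r"
    using vle_gridpt_iff[OF assms, of k r] vle_gridpt_iff[OF assms, of r k]
    by (auto simp: vle_def intro: order_antisym)
  then show ?thesis using vle_gridpt_iff[OF assms] by (auto simp: vlt_def)
qed

lemma vle_gridpt_cell_iff: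
  assumes "0 < A" "0 < K"
    and x: "\<forall>l. gridpt A K r $ l \<le> x $ l \<and> x $ l < gridpt A K r $ l + 2 * A / real K"
  shows "vle (gridpt A K k) x \<longleftrightarrow> (\<forall>l. k l \<le> r l)"
proof -
  have cell: "grid1 A K (r l) \<le> x $ l" "x $ l < grid1 A K (Suc (r l))" for l
    using x by (auto simp: gridpt_def grid1_Suc)
  have "grid1 A K (k l) \<le> x $ l \<longleftrightarrow> k l \<le> r l" for l
  proof
    assume "grid1 A K (k l) \<le> x $ l"
    then have "\<not> grid1 A K (Suc (r l)) \<le> grid1 A K (k l)" using cell[of l] by linarith
    then show "k l \<le> r l" using grid1_le_iff[OF assms(1,2)] by simp
  next
    assume "k l \<le> r l"
    then show "grid1 A K (k l) \<le> x $ l"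
      using cell[of l] grid1_le_iff[OF assms(1,2)] by (meson order_trans)
  qed
  then show ?thesis by (simp add: vle_def gridpt_def)
qed

lemma Ppiece_eq_sum_below:
  "Ppiece A K Pk x = (\<Sum>k\<in>{k\<in>gridI K. vle (gridpt A K k) x}. Pk k x)"
  unfolding Ppiece_def by (simp add: sum.inter_filter[OF finite_gridI] if_distrib cong: if_cong)

theorem lemma6:
  fixes f :: "real^'d::{finite,linorder} \<Rightarrow> real"
    and q :: nat and p \<beta> C A :: real and K :: nat
    and Pk :: "('d::{finite,linorder} \<Rightarrow> nat) \<Rightarrow> real^'d::{finite,linorder} \<Rightarrow> real"
    and r :: "'d::{finite,linorder} \<Rightarrow> nat" and x :: "real^'d::{finite,linorder}"
  assumes hp: "p = real q + \<beta>" and h\<beta>: "0 < \<beta>" "\<beta> \<le> 1"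
    and hf: "pC_smooth q \<beta> C f"
    and hA: "A \<ge> 1" and hK: "K \<ge> 1"
    and hP: "\<forall>k\<in>gridI K. Pk k = taylor q (gridpt A K k)
               (\<lambda>y. f y - (\<Sum>l\<in>{l\<in>gridI K. vlt (gridpt A K l) (gridpt A K k)}. Pk l y))"
    and hr: "r \<in> gridI K"
    and hx: "\<forall>l. gridpt A K r $ l \<le> x $ l \<and> x $ l < gridpt A K r $ l + 2 * A / real K"
  shows "Ppiece A K Pk x = taylor q (gridpt A K r) f x"
proof -
  let ?L = "{l\<in>gridI K. vlt (gridpt A K l) (gridpt A K r)}"
  have A: "0 < A" and K: "0 < K" using hA hK by auto
  have below: "{k\<in>gridI K. vle (gridpt A K k) x} = insert r ?L"
    using hr by (auto simp: vle_gridpt_cell_iff[OF A K hx] vlt_gridpt_iff[OF A K])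
  have "finite ?L" by (simp add: finite_gridI)
  have Pr: "Pk r = taylor q (gridpt A K r) (\<lambda>y. f y - (\<Sum>l\<in>?L. Pk l y))" using hP hr by blast
  have "\<forall>l\<in>?L. \<exists>v g. Pk l = taylor q v g" using hP by blast
  then have "Pk r x = taylor q (gridpt A K r) f x - (\<Sum>l\<in>?L. Pk l x)"
    unfolding Pr
    by (rule taylor_diff_sum_taylor[OF pC_smooth_imp_partials_differentiable[OF hf] \<open>finite ?L\<close>])
  moreover have "r \<notin> ?L" by (simp add: vlt_def)
  ultimately show ?thesis
    using \<open>finite ?L\<close> by (simp add: Ppiece_eq_sum_below below)
qed

end
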